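(* Let $w$ be a string of length $n$ and $i$ a position of $w$ with $i-\mu(i)\ge1$, $i+\mu(i)-1\le n$ and $\mu(i)>1$. Then for every integer $j$ with $i<j<i+\mu(i)$ such that $j-\mu(j)<i$ and $\mu(j)\ne\mu(i)$, we have either $\mu(j)<\frac12\mu(i)$ or $\mu(j)\ge 2\mu(i)$.
   Context: For a position $i\in\{1,\dots,n\}$ of $w$, the local period $\mu(i)$ is the least positive integer $\mu$ such that $w[j]=w[j+\mu]$ for all $j$ with $\max\{1,i-\mu\}\le j$ and $j+\mu\le\min\{n,i+\mu-1\}$. *)

theory Defs
  imports Main
begin

text \<open>Strings are lists; positions are 1-based, so w[j] is w ! (j - 1).\<close>

definition letter :: "'a list \<Rightarrow> nat \<Rightarrow> 'a" where
  "letter w j = w ! (j - 1)"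

definition local_period :: "'a list \<Rightarrow> nat \<Rightarrow> nat" where
  "local_period w i = (LEAST \<mu>::nat. 0 < \<mu> \<and>
     (\<forall>j::nat. max 1 (int i - int \<mu>) \<le> int j \<and>
               int j + int \<mu> \<le> min (int (length w)) (int i + int \<mu> - 1)
               \<longrightarrow> letter w j = letter w (j + \<mu>)))"

end

theory Submission
  imports Defs
begin

text \<open>Let \<open>p = \<mu>(i)\<close> and \<open>q = \<mu>(j)\<close>, and suppose \<open>p \<le> 2q\<close>, \<open>q < 2p\<close>, \<open>q \<noteq> p\<close>. The squares of
  periods \<open>p\<close> and \<open>q\<close> centred at \<open>i\<close> and \<open>j\<close> overlap so much that, combining the two periods,
  one finds a square of shorter period centred at \<open>i\<close> or at \<open>j\<close>, contradicting minimality.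
  Depending on the relative position of the squares, this shorter period is \<open>|p - q|\<close> itself,
  or \<open>q\<close> when \<open>p = 2q\<close>, or, when \<open>|p - q|\<close> is a period of the left half of the square
  with the longer period, a period congruent to the longer one modulo \<open>|p - q|\<close>.\<close>

definition period_on :: "(nat \<Rightarrow> 'a) \<Rightarrow> nat \<Rightarrow> nat \<Rightarrow> nat \<Rightarrow> bool" where
  "period_on g a b d \<longleftrightarrow> (\<forall>k. a \<le> k \<longrightarrow> k + d \<le> b \<longrightarrow> g k = g (k + d))"

lemma period_on_iterate:
  assumes "period_on g a b s" "a \<le> k" "k + u * s \<le> b"
  shows "g k = g (k + u * s)"
  using assms(3)
proof (induction u)
  case (Suc u)
  then have "g k = g (k + u * s)" by simp
  also have "\<dots> = g (k + u * s + s)"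
    using assms(1,2) Suc.prems unfolding period_on_def by simp
  finally show ?case by (simp add: algebra_simps)
qed simp

text \<open>Shifting forward by \<open>P\<close> and back by \<open>t * s\<close> within the left half shifts by
  \<open>d = P - t * s\<close>; choosing \<open>t\<close> maximal with \<open>t * s < P\<close> makes \<open>d\<close> a shorter period.\<close>

lemma square_shorter_period:
  assumes "0 < s" "s < P" "P \<le> c"
    and square: "period_on g (c - P) (c + P - 1) P"
    and left_half: "period_on g (c - P) (c - 1) s"
  shows "\<exists>d. 0 < d \<and> d < P \<and> period_on g (c - d) (c + d - 1) d"
proof -
  define t where "t = (P - 1) div s"
  define d where "d = (P - 1) mod s + 1"
  have "P = d + t * s"
    using div_mult_mod_eq[of "P - 1" s] \<open>s < P\<close> unfolding d_def t_def by linarith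
  have d: "0 < d" "d < P"
    using mod_less_divisor[OF \<open>0 < s\<close>, of "P - 1"] \<open>s < P\<close> unfolding d_def by auto
  have "period_on g (c - d) (c + d - 1) d"
    unfolding period_on_def
  proof (intro allI impI)
    fix m assume m: "c - d \<le> m" "m + d \<le> c + d - 1"
    define k where "k = m + d - P"
    have k: "c - P \<le> k" "k + P = m + d" "k + t * s = m"
      using m \<open>P \<le> c\<close> \<open>P = d + t * s\<close> d unfolding k_def by auto
    have "g m = g k"
      using period_on_iterate[OF left_half, of k t] k m d by simp
    also have "\<dots> = g (k + P)"
      using square k(1,2) m(2) d(2) unfolding period_on_def by simp
    also have "\<dots> = g (m + d)"
      using k(2) by simp
    finally show "g m = g (m + d)" .
  qed
  with d show ?thesis by blast
qed

definition local_periodic :: "'a list \<Rightarrow> nat \<Rightarrow> nat \<Rightarrow> bool" where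
  "local_periodic w c d \<longleftrightarrow>
     (\<forall>k. 1 \<le> k \<longrightarrow> c - d \<le> k \<longrightarrow> k < c \<longrightarrow> k + d \<le> length w \<longrightarrow>
          letter w k = letter w (k + d))"

lemma local_period_eq_Least: "local_period w c = (LEAST d. 0 < d \<and> local_periodic w c d)"
  unfolding local_period_def local_periodic_def by (rule arg_cong[where f = Least]) force

lemma local_periodic_beyond_length: "local_periodic w c (length w + 1)"
  unfolding local_periodic_def by simp

lemma local_periodic_local_period: "local_periodic w c (local_period w c)"
  unfolding local_period_eq_Least
  by (rule LeastI2_ex) (use local_periodic_beyond_length in auto)

lemma local_period_le: "0 < d \<Longrightarrow> local_periodic w c d \<Longrightarrow> local_period w c \<le> d"
  unfolding local_period_eq_Least by (rule Least_le) simp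

lemma local_periodic_iff_period_on:
  assumes "d < c" "c + d \<le> length w + 1"
  shows "local_periodic w c d \<longleftrightarrow> period_on (letter w) (c - d) (c + d - 1) d"
  unfolding local_periodic_def period_on_def
proof (intro iffI allI impI)
  fix k assume "\<forall>k. 1 \<le> k \<longrightarrow> c - d \<le> k \<longrightarrow> k < c \<longrightarrow> k + d \<le> length w \<longrightarrow>
          letter w k = letter w (k + d)" "c - d \<le> k" "k + d \<le> c + d - 1"
  then show "letter w k = letter w (k + d)" using assms by auto
next
  fix k assume "\<forall>k. c - d \<le> k \<longrightarrow> k + d \<le> c + d - 1 \<longrightarrow> letter w k = letter w (k + d)"
    "1 \<le> k" "c - d \<le> k" "k < c" "k + d \<le> length w"
  then show "letter w k = letter w (k + d)" by auto
qed

lemma local_periodic_shorter: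
  assumes "P < c" "c + P \<le> length w + 1" "local_periodic w c P"
    and "0 < s" "s < P" "period_on (letter w) (c - P) (c - 1) s"
  shows "\<exists>d. 0 < d \<and> d < P \<and> local_periodic w c d"
proof -
  have "period_on (letter w) (c - P) (c + P - 1) P"
    using assms(1-3) local_periodic_iff_period_on by blast
  then obtain d where "0 < d" "d < P" "period_on (letter w) (c - d) (c + d - 1) d"
    using square_shorter_period[of s P c] assms by auto
  with assms(1,2) show ?thesis
    using local_periodic_iff_period_on[of d c w] by auto
qed

locale overlapping_local_periods =
  fixes w :: "'a list" and i j p q :: nat
  assumes periodic_i: "local_periodic w i p"
    and periodic_j: "local_periodic w j q"
    and square_i_inside: "p < i" "i + p \<le> length w + 1"
    and j_in_square_i: "i < j" "j < i + p"
    and square_j_reaches_i: "j < i + q"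
begin

lemma letter_shift_p: "i - p \<le> k \<Longrightarrow> k < i \<Longrightarrow> letter w k = letter w (k + p)"
  using periodic_i square_i_inside unfolding local_periodic_def by auto

lemma letter_shift_q:
  "j - q \<le> k \<Longrightarrow> 1 \<le> k \<Longrightarrow> k < j \<Longrightarrow> k + q \<le> length w \<Longrightarrow> letter w k = letter w (k + q)"
  using periodic_j unfolding local_periodic_def by auto

lemma periodic_i_diff:
  assumes "q < p" "i + p < j + q"
  shows "local_periodic w i (p - q)"
  unfolding local_periodic_def
proof (intro allI impI)
  fix k assume k: "1 \<le> k" "i - (p - q) \<le> k" "k < i" "k + (p - q) \<le> length w"
  have "letter w k = letter w (k + p)"
    using k by (intro letter_shift_p) auto
  also have "\<dots> = letter w (k + (p - q))"
    using k assms square_i_inside square_j_reaches_i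
    by (subst letter_shift_q[of "k + (p - q)"]) auto
  finally show "letter w k = letter w (k + (p - q))" .
qed

lemma periodic_i_half:
  assumes "p = 2 * q" "j + q \<le> i + p"
  shows "local_periodic w i q"
  unfolding local_periodic_def
proof (intro allI impI)
  fix k assume k: "1 \<le> k" "i - q \<le> k" "k < i" "k + q \<le> length w"
  show "letter w k = letter w (k + q)"
  proof (cases "j - q \<le> k")
    case True
    then show ?thesis using k j_in_square_i by (intro letter_shift_q) auto
  next
    case False
    have "letter w k = letter w (k + q + q)"
      using k assms letter_shift_p[of k] by (simp add: mult_2 add.assoc)
    also have "\<dots> = letter w (k + q)"
      using k assms False square_i_inside by (subst letter_shift_q[of "k + q"]) auto
    finally show ?thesis .
  qed
qed

lemma shorter_period_j:
  assumes "q < p" "p < 2 * q" "j + q \<le> i + p"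
  shows "\<exists>d. 0 < d \<and> d < q \<and> local_periodic w j d"
proof (rule local_periodic_shorter)
  show "q < j" "j + q \<le> length w + 1" "0 < p - q" "p - q < q"
    using assms square_i_inside j_in_square_i by auto
  show "period_on (letter w) (j - q) (j - 1) (p - q)"
    unfolding period_on_def
  proof (intro allI impI)
    fix k assume k: "j - q \<le> k" "k + (p - q) \<le> j - 1"
    have "letter w k = letter w (k + p)"
      using k assms j_in_square_i by (intro letter_shift_p) auto
    also have "\<dots> = letter w (k + (p - q))"
      using k assms square_i_inside j_in_square_i
      by (subst letter_shift_q[of "k + (p - q)"]) auto
    finally show "letter w k = letter w (k + (p - q))" .
  qed
qed (fact periodic_j)

lemma shorter_period_i:
  assumes "p < q" "q < 2 * p" "j < i + (q - p)"
  shows "\<exists>d. 0 < d \<and> d < p \<and> local_periodic w i d"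
proof (rule local_periodic_shorter)
  show "0 < q - p" "q - p < p"
    using assms by auto
  show "period_on (letter w) (i - p) (i - 1) (q - p)"
    unfolding period_on_def
  proof (intro allI impI)
    fix k assume k: "i - p \<le> k" "k + (q - p) \<le> i - 1"
    have "letter w k = letter w (k + q)"
      using k assms square_i_inside j_in_square_i by (intro letter_shift_q) auto
    also have "\<dots> = letter w (k + (q - p))"
      using k assms by (subst letter_shift_p[of "k + (q - p)"]) auto
    finally show "letter w k = letter w (k + (q - p))" .
  qed
qed (fact square_i_inside periodic_i)+

lemma periodic_j_diff:
  assumes "p < q" "i + (q - p) \<le> j"
  shows "local_periodic w j (q - p)"
  unfolding local_periodic_def
proof (intro allI impI)
  fix k assume k: "1 \<le> k" "j - (q - p) \<le> k" "k < j" "k + (q - p) \<le> length w"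
  have "letter w k = letter w (k - p)"
    using k assms j_in_square_i square_i_inside letter_shift_p[of "k - p"] by auto
  also have "\<dots> = letter w (k + (q - p))"
    using k assms j_in_square_i square_i_inside letter_shift_q[of "k - p"] by auto
  finally show "letter w k = letter w (k + (q - p))" .
qed

lemma shorter_period:
  assumes "p \<noteq> q" "p \<le> 2 * q" "q < 2 * p"
  shows "(\<exists>d. 0 < d \<and> d < p \<and> local_periodic w i d) \<or> (\<exists>d. 0 < d \<and> d < q \<and> local_periodic w j d)"
proof (cases p q rule: linorder_cases)
  case less
  show ?thesis
  proof (cases "j < i + (q - p)")
    case True
    then show ?thesis using less assms shorter_period_i by blast
  next
    case False
    then show ?thesis
      using less periodic_j_diff j_in_square_i by (intro disjI2 exI[of _ "q - p"]) auto
  qed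
next
  case greater
  show ?thesis
  proof (cases "i + p < j + q")
    case True
    then show ?thesis using greater periodic_i_diff j_in_square_i square_j_reaches_i
      by (intro disjI1 exI[of _ "p - q"]) auto
  next
    case False
    show ?thesis
    proof (cases "p = 2 * q")
      case True
      then show ?thesis
        using False periodic_i_half j_in_square_i square_j_reaches_i by (intro disjI1 exI[of _ q]) auto
    next
      case False
      then show ?thesis
        using greater \<open>\<not> i + p < j + q\<close> assms(2) shorter_period_j by simp
    qed
  qed
qed (use assms(1) in simp)

end

theorem lemma7:
  fixes w :: "'a list" and i j :: nat
  assumes "1 \<le> i" and "i \<le> length w"
    and "int i - int (local_period w i) \<ge> 1"
    and "int i + int (local_period w i) - 1 \<le> int (length w)"
    and "local_period w i > 1"
    and "i < j" and "j < i + local_period w i"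
    and "int j - int (local_period w j) < int i"
    and "local_period w j \<noteq> local_period w i"
  shows "2 * local_period w j < local_period w i \<or> local_period w j \<ge> 2 * local_period w i"
proof (rule ccontr)
  assume "\<not> ?thesis"
  then have ratio: "local_period w i \<le> 2 * local_period w j" "local_period w j < 2 * local_period w i"
    by simp_all
  have "local_period w i < i" "i + local_period w i \<le> length w + 1" "j < i + local_period w j"
    using assms(3,4,8) by linarith+
  then interpret overlapping_local_periods w i j "local_period w i" "local_period w j"
    using assms(6,7) local_periodic_local_period by unfold_locales simp_all
  obtain c d where "0 < d" "d < local_period w c" "local_periodic w c d"
    using shorter_period[OF assms(9)[symmetric] ratio] by blast
  with local_period_le[of d w c] show False by simp
qed

end
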